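(* Let $n, q$ be positive integers, let $\mathcal{A} = \langle V, V_0, V_1, E\rangle$ be an arena (over some set of colors $C$) with $n$ nodes, let $U \subseteq V$, and let $S_1$ be a $q$-state strategy of Player 0 in $\mathcal{A}$. Then there exists a chromatic $(q+1)^n$-state strategy $S_2$ of Player 0 in $\mathcal{A}$ such that $\mathsf{col}(S_2, U) \subseteq \mathsf{col}(S_1, U)$.
   Context: An arena over a set of colors $C$ is a tuple $\mathcal{A} = \langle V, V_0, V_1, E\rangle$ of finite sets with $V = V_0 \sqcup V_1$, $E \subseteq V \times C \times V$, and every node having at least one outgoing edge; for $e=(s,c,t)$ write $\mathsf{source}(e)=s$, $\mathsf{col}(e)=c$, $\mathsf{target}(e)=t$. A path is a nonempty finite or infinite sequence of edges $e_1e_2\ldots$ with $\mathsf{target}(e_i)=\mathsf{source}(e_{i+1})$; for each node $v$ there is also a $0$-length path $\lambda_v$ with source and target $v$. $\mathsf{col}$ extends letterwise to sequences of edges. A strategy of Player 0 is a function $S$ assigning to each finite path $p$ with $\mathsf{target}(p)\in V_0$ an edge $S(p)$ with $\mathsf{source}(S(p))=\mathsf{target}(p)$. A path $p=e_1e_2\ldots$ is consistent with $S$ if (when $\mathsf{source}(p)\in V_0$) $e_1=S(\lambda_{\mathsf{source}(p)})$ and for each $1\le i<|p|$ with $\mathsf{target}(e_i)\in V_0$ we have $e_{i+1}=S(e_1\ldots e_i)$; $0$-length paths are always consistent. For $v\in V$, $\mathsf{col}(S,v)\subseteq C^\omega$ is the set of $\mathsf{col}(p)$ over all infinite paths $p$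 from $v$ consistent with $S$, and $\mathsf{col}(S,U)=\bigcup_{v\in U}\mathsf{col}(S,v)$. A memory structure is $\mathcal{M}=\langle M, m_{init},\delta\rangle$ with $M$ finite, $m_{init}\in M$, $\delta: M\times E\to M$ (extended to finite edge sequences in the usual way). $S$ is an $\mathcal{M}$-strategy if for all finite paths $p_1,p_2$ with $\mathsf{target}(p_1)=\mathsf{target}(p_2)\in V_0$, $\delta(m_{init},p_1)=\delta(m_{init},p_2)$ implies $S(p_1)=S(p_2)$. $\mathcal{M}$ is chromatic if there is $\sigma: M\times C\to M$ with $\delta(m,e)=\sigma(m,\mathsf{col}(e))$ for all $m,e$. A (chromatic) $q$-state strategy is an $\mathcal{M}$-strategy for some (chromatic) memory structure $\mathcal{M}$ with $|M|=q$. *)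

theory Defs
  imports Main
begin

type_synonym ('v,'c) edge = "'v \<times> 'c \<times> 'v"

definition src :: "('v,'c) edge \<Rightarrow> 'v" where "src e = fst e"
definition col :: "('v,'c) edge \<Rightarrow> 'c" where "col e = fst (snd e)"
definition tgt :: "('v,'c) edge \<Rightarrow> 'v" where "tgt e = snd (snd e)"

definition arena :: "'c set \<Rightarrow> 'v set \<Rightarrow> 'v set \<Rightarrow> 'v set \<Rightarrow> ('v,'c) edge set \<Rightarrow> bool" where
  "arena C V V0 V1 E \<longleftrightarrow> finite V \<and> finite E \<and> V0 \<union> V1 = V \<and> V0 \<inter> V1 = {} \<and>
     E \<subseteq> V \<times> C \<times> V \<and> (\<forall>v\<in>V. \<exists>e\<in>E. src e = v)"

text \<open>A finite path is represented as a pair (v, es): its source node v and its list of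
  edges es (the empty list gives the 0-length path at v).\<close>
fun chain_from :: "'v \<Rightarrow> ('v,'c) edge list \<Rightarrow> bool" where
  "chain_from v [] = True"
| "chain_from v (e # es) = (src e = v \<and> chain_from (tgt e) es)"

fun pend :: "'v \<Rightarrow> ('v,'c) edge list \<Rightarrow> 'v" where
  "pend v [] = v"
| "pend v (e # es) = pend (tgt e) es"

definition fin_path :: "'v set \<Rightarrow> ('v,'c) edge set \<Rightarrow> 'v \<times> ('v,'c) edge list \<Rightarrow> bool" where
  "fin_path V E p \<longleftrightarrow> fst p \<in> V \<and> set (snd p) \<subseteq> E \<and> chain_from (fst p) (snd p)"

definition ptarget :: "'v \<times> ('v,'c) edge list \<Rightarrow> 'v" where
  "ptarget p = pend (fst p) (snd p)"

text \<open>A strategy of Player 0: to every finite path ending in V0 it assigns an edge leaving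
  the target (values on other arguments are irrelevant).\<close>
definition strategy :: "'v set \<Rightarrow> 'v set \<Rightarrow> ('v,'c) edge set
    \<Rightarrow> ('v \<times> ('v,'c) edge list \<Rightarrow> ('v,'c) edge) \<Rightarrow> bool" where
  "strategy V V0 E S \<longleftrightarrow> (\<forall>p. fin_path V E p \<and> ptarget p \<in> V0 \<longrightarrow> S p \<in> E \<and> src (S p) = ptarget p)"

definition consistent_inf :: "'v set \<Rightarrow> ('v,'c) edge set
    \<Rightarrow> ('v \<times> ('v,'c) edge list \<Rightarrow> ('v,'c) edge) \<Rightarrow> 'v \<Rightarrow> (nat \<Rightarrow> ('v,'c) edge) \<Rightarrow> bool" where
  "consistent_inf V0 E S v \<rho> \<longleftrightarrow>
     (\<forall>i. \<rho> i \<in> E) \<and> src (\<rho> 0) = v \<and> (\<forall>i. tgt (\<rho> i) = src (\<rho> (Suc i))) \<and>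
     (v \<in> V0 \<longrightarrow> \<rho> 0 = S (v, [])) \<and>
     (\<forall>i. tgt (\<rho> i) \<in> V0 \<longrightarrow> \<rho> (Suc i) = S (v, map \<rho> [0..<Suc i]))"

definition col_S :: "'v set \<Rightarrow> ('v,'c) edge set
    \<Rightarrow> ('v \<times> ('v,'c) edge list \<Rightarrow> ('v,'c) edge) \<Rightarrow> 'v set \<Rightarrow> (nat \<Rightarrow> 'c) set" where
  "col_S V0 E S U = (\<Union>v\<in>U. {(\<lambda>i. col (\<rho> i)) | \<rho>. consistent_inf V0 E S v \<rho>})"

definition memory :: "('v,'c) edge set \<Rightarrow> 'm set \<Rightarrow> 'm \<Rightarrow> ('m \<Rightarrow> ('v,'c) edge \<Rightarrow> 'm) \<Rightarrow> bool" where
  "memory E M m0 \<delta> \<longleftrightarrow> finite M \<and> m0 \<in> M \<and> (\<forall>m\<in>M. \<forall>e\<in>E. \<delta> m e \<in> M)"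

definition M_strategy :: "'v set \<Rightarrow> 'v set \<Rightarrow> ('v,'c) edge set \<Rightarrow> 'm \<Rightarrow> ('m \<Rightarrow> ('v,'c) edge \<Rightarrow> 'm)
    \<Rightarrow> ('v \<times> ('v,'c) edge list \<Rightarrow> ('v,'c) edge) \<Rightarrow> bool" where
  "M_strategy V V0 E m0 \<delta> S \<longleftrightarrow>
     (\<forall>p1 p2. fin_path V E p1 \<and> fin_path V E p2 \<and> ptarget p1 = ptarget p2 \<and> ptarget p1 \<in> V0 \<and>
        foldl \<delta> m0 (snd p1) = foldl \<delta> m0 (snd p2) \<longrightarrow> S p1 = S p2)"

definition chromatic :: "'c set \<Rightarrow> ('v,'c) edge set \<Rightarrow> 'm set \<Rightarrow> ('m \<Rightarrow> ('v,'c) edge \<Rightarrow> 'm) \<Rightarrow> bool" where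
  "chromatic C E M \<delta> \<longleftrightarrow> (\<exists>\<sigma>. (\<forall>m\<in>M. \<forall>c\<in>C. \<sigma> m c \<in> M) \<and> (\<forall>m\<in>M. \<forall>e\<in>E. \<delta> m e = \<sigma> m (col e)))"

end

theory Submission
  imports Defs "HOL-Probability.Product_PMF"
begin

text \<open>The chromatic memory of S2 is a partial map from nodes to memory states of S1, hence
  has (q+1)^n values. Initially it sends every node of U to the initial state of S1. Reading a
  colour c, it sends u to \<delta>1 m e for one chosen edge e of colour c into u which S1 could take
  from the source of e in the state m recorded there. S2 plays at v the move of S1 in the state
  recorded for v. Along any S2-play from U the current node always carries a state, so after
  every prefix of colours some node is recorded. Following the chosen edges backwards gives a
  finitely branching tree of infinite height, and Koenig's lemma turns it into an infinite
  S1-consistent play from U with the same colours.\<close>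

lemma chain_from_append: "chain_from v (xs @ ys) \<longleftrightarrow> chain_from v xs \<and> chain_from (pend v xs) ys"
  by (induction xs arbitrary: v) auto

lemma pend_append: "pend v (xs @ ys) = pend (pend v xs) ys"
  by (induction xs arbitrary: v) auto

lemma chain_from_prefix:
  assumes "\<And>i. tgt (\<rho> i) = src (\<rho> (Suc i))"
  shows "chain_from (src (\<rho> 0)) (map \<rho> [0..<k]) \<and> pend (src (\<rho> 0)) (map \<rho> [0..<k]) = src (\<rho> k)"
  by (induction k) (simp_all add: chain_from_append pend_append assms)

lemma fin_path_prefix:
  assumes "E \<subseteq> V \<times> C \<times> V" and "\<And>i. \<rho> i \<in> E" and "\<And>i. tgt (\<rho> i) = src (\<rho> (Suc i))"
  shows "fin_path V E (src (\<rho> 0), map \<rho> [0..<k])"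
    and "ptarget (src (\<rho> 0), map \<rho> [0..<k]) = src (\<rho> k)"
proof -
  have "src (\<rho> 0) \<in> V" using assms(1) assms(2)[of 0] by (auto simp: src_def)
  then show "fin_path V E (src (\<rho> 0), map \<rho> [0..<k])"
    using chain_from_prefix[of \<rho> k, OF assms(3)] assms(2) by (auto simp: fin_path_def)
  show "ptarget (src (\<rho> 0), map \<rho> [0..<k]) = src (\<rho> k)"
    using chain_from_prefix[of \<rho> k, OF assms(3)] by (simp add: ptarget_def)
qed

lemma consistent_inf_iff:
  "consistent_inf V0 E S v \<rho> \<longleftrightarrow>
     (\<forall>i. \<rho> i \<in> E) \<and> src (\<rho> 0) = v \<and> (\<forall>i. tgt (\<rho> i) = src (\<rho> (Suc i))) \<and>
     (\<forall>k. src (\<rho> k) \<in> V0 \<longrightarrow> \<rho> k = S (v, map \<rho> [0..<k]))"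
  unfolding consistent_inf_def
  by (metis list.simps(8) not0_implies_Suc upt_0)

lemma foldl_transport:
  assumes "bij_betw h M M'" and "\<forall>m\<in>M. \<forall>e\<in>E. \<delta> m e \<in> M" and "m \<in> M" and "set es \<subseteq> E"
  shows "foldl (\<lambda>k e. h (\<delta> (inv_into M h k) e)) (h m) es = h (foldl \<delta> m es) \<and> foldl \<delta> m es \<in> M"
  using assms(3,4)
  by (induction es arbitrary: m) (auto simp: bij_betw_inv_into_left[OF assms(1)] assms(2))

lemma memory_transport:
  assumes bij: "bij_betw h M M'" and mem: "memory E M m0 \<delta>" and chrom: "chromatic C E M \<delta>"
    and ms: "M_strategy V V0 E m0 \<delta> S"
  obtains \<delta>' where "memory E M' (h m0) \<delta>'" and "chromatic C E M' \<delta>'"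
    and "M_strategy V V0 E (h m0) \<delta>' S"
proof -
  define \<delta>' where "\<delta>' k e = h (\<delta> (inv_into M h k) e)" for k e
  have inv: "inv_into M h k \<in> M" if "k \<in> M'" for k
    using bij_betwE[OF bij_betw_inv_into[OF bij]] that by blast
  have closed: "\<forall>m\<in>M. \<forall>e\<in>E. \<delta> m e \<in> M" and "m0 \<in> M"
    using mem by (auto simp: memory_def)
  obtain \<sigma> where \<sigma>: "\<forall>m\<in>M. \<forall>c\<in>C. \<sigma> m c \<in> M" "\<forall>m\<in>M. \<forall>e\<in>E. \<delta> m e = \<sigma> m (col e)"
    using chrom by (auto simp: chromatic_def)
  have fold: "foldl \<delta>' (h m0) es = h (foldl \<delta> m0 es) \<and> foldl \<delta> m0 es \<in> M" if "set es \<subseteq> E" for es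
    using foldl_transport[OF bij closed \<open>m0 \<in> M\<close> that] by (simp add: \<delta>'_def[abs_def])
  have "memory E M' (h m0) \<delta>'"
    using mem bij_betw_finite[OF bij] bij_betwE[OF bij] inv closed
    by (auto simp: memory_def \<delta>'_def)
  moreover have "chromatic C E M' \<delta>'"
    unfolding chromatic_def
    by (rule exI[of _ "\<lambda>k c. h (\<sigma> (inv_into M h k) c)"])
      (use \<sigma> inv bij_betwE[OF bij] in \<open>auto simp: \<delta>'_def\<close>)
  moreover have "M_strategy V V0 E (h m0) \<delta>' S"
    unfolding M_strategy_def
  proof (intro allI impI)
    fix p1 p2
    assume p: "fin_path V E p1 \<and> fin_path V E p2 \<and> ptarget p1 = ptarget p2 \<and> ptarget p1 \<in> V0 \<and>
      foldl \<delta>' (h m0) (snd p1) = foldl \<delta>' (h m0) (snd p2)"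
    then have edges: "set (snd p1) \<subseteq> E" "set (snd p2) \<subseteq> E" by (auto simp: fin_path_def)
    then have "h (foldl \<delta> m0 (snd p1)) = h (foldl \<delta> m0 (snd p2))" using p fold by simp
    then have "foldl \<delta> m0 (snd p1) = foldl \<delta> m0 (snd p2)"
      using fold[OF edges(1)] fold[OF edges(2)] bij_betw_imp_inj_on[OF bij] by (auto dest: inj_onD)
    then show "S p1 = S p2" using ms p unfolding M_strategy_def by blast
  qed
  ultimately show thesis by (rule that)
qed

lemma finite_meets_Inter_decseq:
  assumes "finite Y" and "\<And>d. Y \<inter> A d \<noteq> {}" and "\<And>d. A (Suc d) \<subseteq> A d"
  shows "\<exists>y\<in>Y. \<forall>d. y \<in> A d"
proof (rule ccontr)
  assume "\<not> ?thesis"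
  then obtain d where d: "\<And>y. y \<in> Y \<Longrightarrow> y \<notin> A (d y)" by metis
  obtain y where y: "y \<in> Y" "y \<in> A (Max (d ` Y))" using assms(2) by blast
  have "A (Max (d ` Y)) \<subseteq> A (d y)"
    using decseq_SucI[of A, OF assms(3)] y(1) assms(1) by (simp add: decseqD)
  then show False using d y by blast
qed

primrec descend :: "(nat \<Rightarrow> 'a \<Rightarrow> 'a) \<Rightarrow> nat \<Rightarrow> nat \<Rightarrow> 'a \<Rightarrow> 'a" where
  "descend P i 0 x = x"
| "descend P i (Suc d) x = descend P i d (P (i + d) x)"

lemma descend_Suc_outer: "descend P i (Suc d) x = P i (descend P (Suc i) d x)"
  by (induction d arbitrary: x) simp_all

lemma descend_in:
  assumes "\<And>k x. x \<in> L (Suc k) \<Longrightarrow> P k x \<in> L k" and "x \<in> L (i + d)"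
  shows "descend P i d x \<in> L i"
  using assms(2) by (induction d arbitrary: x) (simp_all add: assms(1))

lemma koenig_inverse_limit:
  fixes L :: "nat \<Rightarrow> 'a set" and P :: "nat \<Rightarrow> 'a \<Rightarrow> 'a"
  assumes fin: "\<And>k. finite (L k)" and ne: "\<And>k. L k \<noteq> {}"
    and P: "\<And>k x. x \<in> L (Suc k) \<Longrightarrow> P k x \<in> L k"
  shows "\<exists>b. \<forall>k. b k \<in> L k \<and> P k (b (Suc k)) = b k"
proof -
  define shadow where "shadow i d = descend P i d ` L (i + d)" for i d
  define core where "core i = {x. \<forall>d. x \<in> shadow i d}" for i
  have shrink: "shadow i (Suc d) \<subseteq> shadow i d" for i d
    using P by (auto simp: shadow_def)
  have shadow_sub: "shadow i d \<subseteq> L i" for i d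
    using descend_in[of L P, OF P] by (auto simp: shadow_def)
  have "\<exists>x\<in>L 0. \<forall>d. x \<in> shadow 0 d"
  proof (rule finite_meets_Inter_decseq[of "L 0" "shadow 0", OF fin _ shrink])
    show "L 0 \<inter> shadow 0 d \<noteq> {}" for d
      using ne[of d] shadow_sub[of 0 d] by (auto simp: shadow_def)
  qed
  then have core0: "\<exists>x. x \<in> core 0" by (auto simp: core_def)
  have core_step: "\<exists>y. y \<in> core (Suc i) \<and> P i y = x" if x: "x \<in> core i" for i x
  proof -
    let ?Y = "{y \<in> L (Suc i). P i y = x}"
    have meets: "?Y \<inter> shadow (Suc i) d \<noteq> {}" for d
    proof -
      have "x \<in> descend P i (Suc d) ` L (i + Suc d)"
        using x unfolding core_def shadow_def by blast
      then obtain z where z: "z \<in> L (Suc i + d)" "x = P i (descend P (Suc i) d z)"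
        by (auto simp del: descend.simps(2) simp: descend_Suc_outer)
      have "descend P (Suc i) d z \<in> L (Suc i)"
        using descend_in[of L P, OF P z(1)] .
      then show ?thesis using z by (auto simp: shadow_def)
    qed
    have "finite ?Y" using fin by simp
    then obtain y where "y \<in> ?Y" "\<forall>d. y \<in> shadow (Suc i) d"
      using finite_meets_Inter_decseq[of ?Y "shadow (Suc i)", OF _ meets shrink] by blast
    then show ?thesis unfolding core_def by auto
  qed
  obtain b where "\<forall>k. b k \<in> core k \<and> P k (b (Suc k)) = b k"
    using dependent_nat_choice[of "\<lambda>k x. x \<in> core k" "\<lambda>k x y. P k y = x"] core0 core_step
    by blast
  moreover have "core k \<subseteq> L k" for k
    using shadow_sub by (auto simp: core_def)
  ultimately show ?thesis by blast
qed

locale chromatic_construction =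
  fixes C :: "'c set" and V V0 V1 :: "'v set" and E :: "('v,'c) edge set" and U :: "'v set"
    and S1 :: "'v \<times> ('v,'c) edge list \<Rightarrow> ('v,'c) edge"
    and M1 :: "'m set" and m1 :: 'm and \<delta>1 :: "'m \<Rightarrow> ('v,'c) edge \<Rightarrow> 'm"
  assumes arena: "arena C V V0 V1 E" and U_subset: "U \<subseteq> V"
    and S1_strategy: "strategy V V0 E S1"
    and S1_memory: "memory E M1 m1 \<delta>1" and S1_M_strategy: "M_strategy V V0 E m1 \<delta>1 S1"
begin

lemma finite_V: "finite V" and E_subset: "E \<subseteq> V \<times> C \<times> V" and V0_subset: "V0 \<subseteq> V"
  and out_edge: "v \<in> V \<Longrightarrow> \<exists>e\<in>E. src e = v"
  using arena unfolding arena_def by auto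

lemma tgt_in_V: "e \<in> E \<Longrightarrow> tgt e \<in> V"
  using E_subset by (auto simp: tgt_def)

text \<open>Well defined because S1 is an M1-strategy; an arbitrary edge out of v if no path reaches v
  in memory state m.\<close>
definition move :: "'v \<Rightarrow> 'm \<Rightarrow> ('v,'c) edge" where
  "move v m = (SOME e. e \<in> E \<and> src e = v \<and>
     (\<forall>p. fin_path V E p \<and> ptarget p = v \<and> foldl \<delta>1 m1 (snd p) = m \<longrightarrow> S1 p = e))"

lemma move:
  assumes "v \<in> V0"
  shows "move v m \<in> E" and "src (move v m) = v"
    and "\<And>p. fin_path V E p \<Longrightarrow> ptarget p = v \<Longrightarrow> foldl \<delta>1 m1 (snd p) = m \<Longrightarrow> S1 p = move v m"
proof -
  have "\<exists>e. e \<in> E \<and> src e = v \<and>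
      (\<forall>p. fin_path V E p \<and> ptarget p = v \<and> foldl \<delta>1 m1 (snd p) = m \<longrightarrow> S1 p = e)"
  proof (cases "\<exists>p. fin_path V E p \<and> ptarget p = v \<and> foldl \<delta>1 m1 (snd p) = m")
    case True
    then obtain p where p: "fin_path V E p" "ptarget p = v" "foldl \<delta>1 m1 (snd p) = m" by blast
    have "S1 p \<in> E \<and> src (S1 p) = ptarget p"
      using S1_strategy p(1,2) assms unfolding strategy_def by blast
    moreover have "S1 p' = S1 p" if "fin_path V E p'" "ptarget p' = v" "foldl \<delta>1 m1 (snd p') = m" for p'
      using S1_M_strategy that p assms unfolding M_strategy_def by metis
    ultimately show ?thesis using p(2) by blast
  next
    case False
    then show ?thesis using out_edge assms V0_subset by blast
  qed
  from someI_ex[OF this] show "move v m \<in> E" "src (move v m) = v"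
    "\<And>p. fin_path V E p \<Longrightarrow> ptarget p = v \<Longrightarrow> foldl \<delta>1 m1 (snd p) = m \<Longrightarrow> S1 p = move v m"
    unfolding move_def[symmetric] by auto
qed

definition admissible :: "('v \<Rightarrow> 'm option) \<Rightarrow> ('v,'c) edge \<Rightarrow> bool" where
  "admissible f e \<longleftrightarrow> e \<in> E \<and> (\<exists>m. f (src e) = Some m \<and> (src e \<in> V0 \<longrightarrow> e = move (src e) m))"

definition pred_edge :: "('v \<Rightarrow> 'm option) \<Rightarrow> 'c \<Rightarrow> 'v \<Rightarrow> ('v,'c) edge" where
  "pred_edge f c u = (SOME e. admissible f e \<and> col e = c \<and> tgt e = u)"

definition update :: "('v \<Rightarrow> 'm option) \<Rightarrow> 'c \<Rightarrow> 'v \<Rightarrow> 'm option" where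
  "update f c u = (if \<exists>e. admissible f e \<and> col e = c \<and> tgt e = u
     then Some (\<delta>1 (the (f (src (pred_edge f c u)))) (pred_edge f c u)) else None)"

lemma update_eq_None: "update f c u = None \<longleftrightarrow> \<not> (\<exists>e. admissible f e \<and> col e = c \<and> tgt e = u)"
  by (auto simp: update_def)

lemma pred_edge:
  assumes "update f c u \<noteq> None"
  shows "admissible f (pred_edge f c u)" and "col (pred_edge f c u) = c"
    and "tgt (pred_edge f c u) = u"
    and "update f c u = Some (\<delta>1 (the (f (src (pred_edge f c u)))) (pred_edge f c u))"
proof -
  have ex: "\<exists>e. admissible f e \<and> col e = c \<and> tgt e = u"
    using assms update_eq_None by metis
  from someI_ex[OF ex] show "admissible f (pred_edge f c u)" "col (pred_edge f c u) = c"
    "tgt (pred_edge f c u) = u"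
    unfolding pred_edge_def by auto
  show "update f c u = Some (\<delta>1 (the (f (src (pred_edge f c u)))) (pred_edge f c u))"
    using ex by (simp add: update_def)
qed

definition init :: "'v \<Rightarrow> 'm option" where
  "init u = (if u \<in> U then Some m1 else None)"

definition states :: "('v \<Rightarrow> 'm option) set" where
  "states = PiE_dflt V None (\<lambda>_. insert None (Some ` M1))"

lemma finite_M1: "finite M1" and m1_in_M1: "m1 \<in> M1"
  and \<delta>1_closed: "m \<in> M1 \<Longrightarrow> e \<in> E \<Longrightarrow> \<delta>1 m e \<in> M1"
  using S1_memory by (auto simp: memory_def)

lemma card_states: "card states = Suc (card M1) ^ card V"
proof -
  have "card (insert None (Some ` M1)) = Suc (card M1)"
    using finite_M1 by (simp add: card_image)
  then show ?thesis
    using finite_V finite_M1 by (simp add: states_def card_PiE_dflt)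
qed

lemma finite_states: "finite states"
  using finite_V finite_M1 by (auto simp: states_def)

lemma init_in_states: "init \<in> states"
  using U_subset m1_in_M1 by (auto simp: states_def PiE_dflt_def init_def)

lemma update_in_states:
  assumes f: "f \<in> states"
  shows "update f c \<in> states"
  unfolding states_def PiE_dflt_def
proof (intro CollectI allI conjI impI)
  fix u
  show "update f c u \<in> insert None (Some ` M1)"
  proof (cases "update f c u = None")
    case False
    let ?e = "pred_edge f c u"
    obtain m where m: "?e \<in> E" "f (src ?e) = Some m"
      using pred_edge(1)[OF False] by (auto simp: admissible_def)
    then have "m \<in> M1"
      using f E_subset by (force simp: states_def PiE_dflt_def src_def)
    then show ?thesis using pred_edge(4)[OF False] m \<delta>1_closed by simp
  qed simp
  show "update f c u = None" if "u \<notin> V"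
  proof (rule ccontr)
    assume "update f c u \<noteq> None"
    then have "pred_edge f c u \<in> E" "tgt (pred_edge f c u) = u"
      using pred_edge(1,3) by (auto simp: admissible_def)
    then show False using that tgt_in_V[of "pred_edge f c u"] by simp
  qed
qed

definition update_edge :: "('v \<Rightarrow> 'm option) \<Rightarrow> ('v,'c) edge \<Rightarrow> 'v \<Rightarrow> 'm option" where
  "update_edge f e = update f (col e)"

text \<open>When no state is recorded at the target, move gets the junk state the None; this never
  happens along S2-plays from U.\<close>
definition S2 :: "'v \<times> ('v,'c) edge list \<Rightarrow> ('v,'c) edge" where
  "S2 p = move (ptarget p) (the (foldl update_edge init (snd p) (ptarget p)))"

lemma S2_chromatic_memory_strategy:
  shows "strategy V V0 E S2" and "memory E states init update_edge"
    and "chromatic C E states update_edge" and "M_strategy V V0 E init update_edge S2"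
proof -
  show "strategy V V0 E S2"
    using move(1,2) by (simp add: strategy_def S2_def)
  show "memory E states init update_edge"
    using finite_states init_in_states update_in_states by (simp add: memory_def update_edge_def)
  show "chromatic C E states update_edge"
    unfolding chromatic_def update_edge_def
    by (rule exI[of _ update]) (simp add: update_in_states)
  show "M_strategy V V0 E init update_edge S2"
    by (simp add: M_strategy_def S2_def)
qed

primrec run :: "(nat \<Rightarrow> 'c) \<Rightarrow> nat \<Rightarrow> 'v \<Rightarrow> 'm option" where
  "run c 0 = init"
| "run c (Suc k) = update (run c k) (c k)"

lemma foldl_update_edge: "foldl update_edge init (map \<rho> [0..<k]) = run (\<lambda>i. col (\<rho> i)) k"
  by (induction k) (simp_all add: update_edge_def)

lemma run_in_V:
  assumes "run c k w \<noteq> None"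
  shows "w \<in> V"
proof -
  have "run c k \<in> states"
    by (induction k) (simp_all add: init_in_states update_in_states)
  then have "w \<notin> V \<Longrightarrow> run c k w = None"
    unfolding states_def PiE_dflt_def by blast
  then show ?thesis using assms by blast
qed

lemma run_defined_along_S2_play:
  assumes play: "consistent_inf V0 E S2 v \<rho>" and "v \<in> U"
  shows "run (\<lambda>i. col (\<rho> i)) k (src (\<rho> k)) \<noteq> None"
proof (induction k)
  case 0
  then show ?case using assms unfolding consistent_inf_iff by (simp add: init_def)
next
  case (Suc k)
  let ?c = "\<lambda>i. col (\<rho> i)"
  obtain m where m: "run ?c k (src (\<rho> k)) = Some m" using Suc by auto
  have "\<rho> k = move (src (\<rho> k)) m" if "src (\<rho> k) \<in> V0"
  proof -
    have "\<rho> k = S2 (v, map \<rho> [0..<k])" using play that unfolding consistent_inf_iff by blast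
    also have "\<dots> = move (src (\<rho> k)) m"
      using play m chain_from_prefix[of \<rho> k]
      by (simp add: S2_def ptarget_def foldl_update_edge consistent_inf_iff)
    finally show ?thesis .
  qed
  then have "admissible (run ?c k) (\<rho> k)"
    using play m unfolding consistent_inf_iff admissible_def by blast
  then have "update (run ?c k) (?c k) (tgt (\<rho> k)) \<noteq> None"
    unfolding update_eq_None by blast
  then show ?case
    using play unfolding consistent_inf_iff by simp
qed

lemma run_backward_chain:
  assumes "\<And>k. \<exists>w. run c k w \<noteq> None"
  obtains b where "\<And>k. run c k (b k) \<noteq> None"
    and "\<And>k. src (pred_edge (run c k) (c k) (b (Suc k))) = b k"
proof -
  let ?L = "\<lambda>k. {w. run c k w \<noteq> None}"
  let ?P = "\<lambda>k x. src (pred_edge (run c k) (c k) x)"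
  have fin: "finite (?L k)" for k
    by (rule finite_subset[OF _ finite_V]) (auto intro: run_in_V)
  have nonempty: "?L k \<noteq> {}" for k
    using assms by simp
  have parent: "?P k x \<in> ?L k" if "x \<in> ?L (Suc k)" for k x
  proof -
    have "admissible (run c k) (pred_edge (run c k) (c k) x)"
      using pred_edge(1)[of "run c k" "c k" x] that by simp
    then show ?thesis by (auto simp: admissible_def)
  qed
  obtain b where b: "\<forall>k. b k \<in> ?L k \<and> ?P k (b (Suc k)) = b k"
    using koenig_inverse_limit[of ?L ?P, OF fin nonempty parent] by blast
  show thesis
    by (rule that[of b]) (use b in simp_all)
qed

lemma col_S1_if_run_defined:
  assumes "\<And>k. \<exists>w. run c k w \<noteq> None"
  shows "c \<in> col_S V0 E S1 U"
proof -
  obtain b where b: "\<And>k. run c k (b k) \<noteq> None"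
    and parent: "\<And>k. src (pred_edge (run c k) (c k) (b (Suc k))) = b k"
    using run_backward_chain assms by blast
  define \<rho> where "\<rho> i = pred_edge (run c i) (c i) (b (Suc i))" for i
  have \<rho>: "admissible (run c i) (\<rho> i)" "col (\<rho> i) = c i" "src (\<rho> i) = b i"
    "tgt (\<rho> i) = b (Suc i)" "run c (Suc i) (b (Suc i)) = Some (\<delta>1 (the (run c i (b i))) (\<rho> i))" for i
    using pred_edge[of "run c i" "c i" "b (Suc i)"] b[of "Suc i"] parent[of i]
    by (simp_all add: \<rho>_def)
  have edges: "\<rho> i \<in> E" and chain: "tgt (\<rho> i) = src (\<rho> (Suc i))" for i
    using \<rho> by (auto simp: admissible_def)
  have "b 0 \<in> U" using b[of 0] by (simp add: init_def split: if_splits)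
  have recorded: "run c k (b k) = Some (foldl \<delta>1 m1 (map \<rho> [0..<k]))" for k
    by (induction k) (simp_all add: init_def \<open>b 0 \<in> U\<close> \<rho>(5) del: run.simps(2))
  have "\<rho> k = S1 (b 0, map \<rho> [0..<k])" if "src (\<rho> k) \<in> V0" for k
  proof -
    have "b k \<in> V0" using that \<rho>(3) by simp
    have prefix: "fin_path V E (b 0, map \<rho> [0..<k])"
      and target: "ptarget (b 0, map \<rho> [0..<k]) = b k"
      using fin_path_prefix[of E V C \<rho>, OF E_subset edges chain, of k] \<rho>(3) by simp_all
    have "\<rho> k = move (b k) (foldl \<delta>1 m1 (map \<rho> [0..<k]))"
      using \<rho>(1,3) recorded that by (auto simp: admissible_def)
    also have "\<dots> = S1 (b 0, map \<rho> [0..<k])"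
      using move(3)[OF \<open>b k \<in> V0\<close> prefix target] by simp
    finally show ?thesis .
  qed
  then have "consistent_inf V0 E S1 (b 0) \<rho>"
    using edges chain \<rho>(3) unfolding consistent_inf_iff by blast
  moreover have "c = (\<lambda>i. col (\<rho> i))" using \<rho>(2) by simp
  ultimately show ?thesis using \<open>b 0 \<in> U\<close> unfolding col_S_def by blast
qed

lemma col_S_S2_subset: "col_S V0 E S2 U \<subseteq> col_S V0 E S1 U"
proof
  fix c assume "c \<in> col_S V0 E S2 U"
  then obtain v \<rho> where "v \<in> U" "consistent_inf V0 E S2 v \<rho>" and c: "c = (\<lambda>i. col (\<rho> i))"
    unfolding col_S_def by blast
  then have "run c k (src (\<rho> k)) \<noteq> None" for k
    using run_defined_along_S2_play by blast
  then show "c \<in> col_S V0 E S1 U" using col_S1_if_run_defined by blast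
qed

end

theorem theorem1:
  fixes C :: "'c set" and V V0 V1 :: "'v set" and E :: "('v,'c) edge set"
    and U :: "'v set" and n q :: nat
    and S1 :: "'v \<times> ('v,'c) edge list \<Rightarrow> ('v,'c) edge"
    and M1 :: "'m set" and m1 :: 'm and \<delta>1 :: "'m \<Rightarrow> ('v,'c) edge \<Rightarrow> 'm"
  assumes "arena C V V0 V1 E" and "card V = n" and "0 < n" and "0 < q"
    and "U \<subseteq> V"
    and "strategy V V0 E S1"
    and "memory E M1 m1 \<delta>1" and "card M1 = q" and "M_strategy V V0 E m1 \<delta>1 S1"
  shows "\<exists>(S2 :: 'v \<times> ('v,'c) edge list \<Rightarrow> ('v,'c) edge) (M2 :: nat set) m2 \<delta>2.
           strategy V V0 E S2 \<and> memory E M2 m2 \<delta>2 \<and> card M2 = (q + 1) ^ n \<and>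
           chromatic C E M2 \<delta>2 \<and> M_strategy V V0 E m2 \<delta>2 S2 \<and>
           col_S V0 E S2 U \<subseteq> col_S V0 E S1 U"
proof -
  interpret chromatic_construction C V V0 V1 E U S1 M1 m1 \<delta>1
    using assms by unfold_locales
  obtain h where h: "bij_betw h states {0..<(q + 1) ^ n}"
    using ex_bij_betw_finite_nat[OF finite_states] card_states assms(2,8) by auto
  obtain \<delta>2 where "memory E {0..<(q + 1) ^ n} (h init) \<delta>2" "chromatic C E {0..<(q + 1) ^ n} \<delta>2"
    "M_strategy V V0 E (h init) \<delta>2 S2"
    using memory_transport[OF h S2_chromatic_memory_strategy(2-4)] .
  then show ?thesis
    using S2_chromatic_memory_strategy(1) col_S_S2_subset by fastforce
qed

end
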